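(* There is an absolute constant $d$ such that for every finite simple digraph $H$, every positive integer $k$, and every tournament $T$ that does not contain $k$ pairwise arc-disjoint immersion copies of $H$, we have $\mathrm{ctw}(T)\le d\,\|H\|^2k^2$.
   Context: All digraphs are finite and simple; $\|H\|:=|V(H)|+|A(H)|$. A tournament is a simple digraph with exactly one arc between every pair of distinct vertices. An immersion copy of $H$ in $T$ is a subgraph $\widehat H$ of $T$ together with a map sending vertices of $H$ to distinct vertices of $\widehat H$ and arcs $(u,v)$ of $H$ to directed paths from the image of $u$ to the image of $v$, such that every arc of $\widehat H$ lies on exactly one of these paths. For an ordering $\sigma:V(T)\to[|V(T)|]$ (a bijection) and $\alpha\in\{0,\dots,|V(T)|\}$, the $\alpha$-cut is the set of arcs $(u,v)$ with $\sigma(u)>\alpha\ge\sigma(v)$; the width of $\sigma$ is the maximum size of an $\alpha$-cut over all $\alpha$, and the cutwidth $\mathrm{ctw}(T)$ is the minimum width over all orderings. *)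

theory Defs
  imports Complex_Main
begin

text \<open>A finite simple digraph: vertex set V, arc set A of ordered pairs, no loops.
  (A set of ordered pairs excludes parallel arcs.)\<close>
definition simple_digraph :: "'a set \<Rightarrow> ('a \<times> 'a) set \<Rightarrow> bool" where
  "simple_digraph V A \<longleftrightarrow> finite V \<and> A \<subseteq> V \<times> V \<and> (\<forall>v. (v, v) \<notin> A)"

definition tournament :: "'a set \<Rightarrow> ('a \<times> 'a) set \<Rightarrow> bool" where
  "tournament V A \<longleftrightarrow> simple_digraph V A \<and>
     (\<forall>u\<in>V. \<forall>v\<in>V. u \<noteq> v \<longrightarrow> ((u, v) \<in> A \<longleftrightarrow> (v, u) \<notin> A))"

definition size_dg :: "'a set \<Rightarrow> ('a \<times> 'a) set \<Rightarrow> nat" where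
  "size_dg V A = card V + card A"

definition path_arcs :: "'a list \<Rightarrow> ('a \<times> 'a) set" where
  "path_arcs xs = set (zip xs (tl xs))"

definition dpath :: "('a \<times> 'a) set \<Rightarrow> 'a list \<Rightarrow> 'a \<Rightarrow> 'a \<Rightarrow> bool" where
  "dpath B xs s t \<longleftrightarrow> xs \<noteq> [] \<and> hd xs = s \<and> last xs = t \<and> distinct xs \<and>
     path_arcs xs \<subseteq> B"

definition immersion_copy ::
  "'a set \<Rightarrow> ('a \<times> 'a) set \<Rightarrow> 'b set \<Rightarrow> ('b \<times> 'b) set \<Rightarrow>
   'b set \<Rightarrow> ('b \<times> 'b) set \<Rightarrow> ('a \<Rightarrow> 'b) \<Rightarrow> ('a \<times> 'a \<Rightarrow> 'b list) \<Rightarrow> bool" where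
  "immersion_copy VH AH VT AT W B phi P \<longleftrightarrow>
     W \<subseteq> VT \<and> B \<subseteq> AT \<and> B \<subseteq> W \<times> W \<and>
     inj_on phi VH \<and> phi ` VH \<subseteq> W \<and>
     (\<forall>e\<in>AH. set (P e) \<subseteq> W \<and> dpath B (P e) (phi (fst e)) (phi (snd e))) \<and>
     (\<forall>b\<in>B. \<exists>!e. e \<in> AH \<and> b \<in> path_arcs (P e))"

definition has_disjoint_immersions ::
  "nat \<Rightarrow> 'a set \<Rightarrow> ('a \<times> 'a) set \<Rightarrow> 'b set \<Rightarrow> ('b \<times> 'b) set \<Rightarrow> bool" where
  "has_disjoint_immersions k VH AH VT AT \<longleftrightarrow>
     (\<exists>Ws Bs phis Ps. (\<forall>i<k. immersion_copy VH AH VT AT (Ws i) (Bs i) (phis i) (Ps i)) \<and>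
        (\<forall>i<k. \<forall>j<k. i \<noteq> j \<longrightarrow> Bs i \<inter> Bs j = {}))"

definition cut_at :: "('a \<times> 'a) set \<Rightarrow> ('a \<Rightarrow> nat) \<Rightarrow> nat \<Rightarrow> ('a \<times> 'a) set" where
  "cut_at A \<sigma> \<alpha> = {(u, v) \<in> A. \<sigma> u > \<alpha> \<and> \<alpha> \<ge> \<sigma> v}"

definition ordering_width :: "'a set \<Rightarrow> ('a \<times> 'a) set \<Rightarrow> ('a \<Rightarrow> nat) \<Rightarrow> nat" where
  "ordering_width V A \<sigma> = Max ((\<lambda>\<alpha>. card (cut_at A \<sigma> \<alpha>)) ` {0..card V})"

definition cutwidth :: "'a set \<Rightarrow> ('a \<times> 'a) set \<Rightarrow> nat" where
  "cutwidth V A = Min {ordering_width V A \<sigma> | \<sigma>. bij_betw \<sigma> V {1..card V}}"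

end

(*
  Order the tournament by decreasing outdegree and put N = k * ||H||. If some cut of this
  ordering has more than 200 N^2 arcs, take a cut alpha0 of maximum size. Maximality forces
  the vertices at positions near alpha0 to have outdegree n - alpha0 + O(N), and N such
  vertices are robustly linked: if two of them were not joined by a walk of at most four arcs
  avoiding some 4N deleted arcs, the ball of radius two around the first would be a vertex set
  of size n - alpha0 + O(N) with only O(N^2) out-arcs. But among all vertex sets of a given
  size, the final segment of the ordering has the fewest out-arcs, and cuts at positions
  O(N) away from alpha0 lose only O(N^2) arcs against the maximal one. Greedily routing the
  arcs of k copies of H between N robustly linked vertices then gives k arc-disjoint
  immersions.
*)
theory Submission
  imports Defs "HOL-Library.Disjoint_Sets" "HOL-Library.Product_Lexorder"
begin

section \<open>Short walks and arc-disjoint routing\<close>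

lemma path_arcs_Nil [simp]: "path_arcs [] = {}"
  and path_arcs_singleton [simp]: "path_arcs [a] = {}"
  and path_arcs_Cons_Cons [simp]: "path_arcs (a # b # xs) = insert (a, b) (path_arcs (b # xs))"
  by (simp_all add: path_arcs_def)

lemma path_arcs_append:
  "path_arcs (xs @ ys) =
     path_arcs xs \<union> path_arcs ys \<union> (if xs = [] \<or> ys = [] then {} else {(last xs, hd ys)})"
proof (induction xs rule: induct_list012)
  case (3 a b xs)
  then show ?case by auto
qed (cases ys; auto)+

lemma card_path_arcs_le: "card (path_arcs xs) \<le> length xs - 1"
  unfolding path_arcs_def using card_length[of "zip xs (tl xs)"] by simp

lemma set_subset_if_path_arcs_subset:
  "hd xs \<in> V \<Longrightarrow> path_arcs xs \<subseteq> V \<times> V \<Longrightarrow> set xs \<subseteq> V"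
  by (induction xs rule: induct_list012) auto

lemma dpath_mono: "dpath B xs s t \<Longrightarrow> B \<subseteq> B' \<Longrightarrow> dpath B' xs s t"
  unfolding dpath_def by blast

text \<open>Cutting out the closed subwalk between two visits of the same vertex.\<close>
lemma walk_to_dpath:
  assumes "xs \<noteq> []"
  shows "\<exists>ys. dpath (path_arcs xs) ys (hd xs) (last xs) \<and> length ys \<le> length xs"
  using assms
proof (induction "length xs" arbitrary: xs rule: less_induct)
  case less
  show ?case
  proof (cases "distinct xs")
    case True
    then show ?thesis using less.prems by (auto simp: dpath_def)
  next
    case False
    then obtain as y bs cs where xs: "xs = as @ [y] @ bs @ [y] @ cs"
      using not_distinct_decomp by blast
    let ?xs' = "as @ [y] @ cs"
    have "path_arcs (y # cs) \<subseteq> path_arcs (y # bs @ y # cs)"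
      using path_arcs_append[of "y # bs" "y # cs"] by auto
    then have "path_arcs ?xs' \<subseteq> path_arcs xs"
      unfolding xs using path_arcs_append[of as "y # cs"] path_arcs_append[of as "y # bs @ y # cs"]
      by (auto split: if_splits)
    moreover have "hd ?xs' = hd xs" using xs by (cases as) simp_all
    moreover have "last ?xs' = last xs" using xs by (cases cs) simp_all
    moreover have "length ?xs' < length xs" using xs by simp
    ultimately show ?thesis
      using less.hyps[of ?xs'] by (fastforce intro: dpath_mono)
  qed
qed

definition short_walk :: "('a \<times> 'a) set \<Rightarrow> 'a \<Rightarrow> 'a \<Rightarrow> bool" where
  "short_walk B x y \<longleftrightarrow>
     (\<exists>xs. xs \<noteq> [] \<and> hd xs = x \<and> last xs = y \<and> length xs \<le> 5 \<and> path_arcs xs \<subseteq> B)"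

definition robustly_linked :: "('a \<times> 'a) set \<Rightarrow> 'a set \<Rightarrow> nat \<Rightarrow> bool" where
  "robustly_linked A X R \<longleftrightarrow>
     (\<forall>x\<in>X. \<forall>y\<in>X. x \<noteq> y \<longrightarrow> (\<forall>Z. finite Z \<longrightarrow> card Z \<le> R \<longrightarrow> short_walk (A - Z) x y))"

lemma short_dpath_if_short_walk:
  assumes "short_walk B x y"
  shows "\<exists>xs. dpath B xs x y \<and> card (path_arcs xs) \<le> 4"
proof -
  obtain xs where xs: "xs \<noteq> []" "hd xs = x" "last xs = y" "length xs \<le> 5" "path_arcs xs \<subseteq> B"
    using assms unfolding short_walk_def by blast
  then obtain ys where "dpath (path_arcs xs) ys x y" "length ys \<le> 5"
    using walk_to_dpath[of xs] by auto
  then show ?thesis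
    using xs(5) card_path_arcs_le[of ys] by (auto intro: dpath_mono)
qed

lemma short_walk_if_path_arcs_subset:
  "length as \<le> 3 \<Longrightarrow> path_arcs (x # as @ [y]) \<subseteq> B \<Longrightarrow> short_walk B x y"
  unfolding short_walk_def by (intro exI[of _ "x # as @ [y]"]) simp

lemma separation_if_no_short_walk:
  assumes "\<not> short_walk B x y" "x \<noteq> y"
    and S1_def: "S1 = insert x {a. (x, a) \<in> B}" and T1_def: "T1 = insert y {b. (b, y) \<in> B}"
    and S2_def: "S2 = S1 \<union> {c. \<exists>a\<in>S1. (a, c) \<in> B}"
  shows "S1 \<subseteq> S2" "S2 \<inter> T1 = {}"
    and "\<And>a b. (a, b) \<in> B \<Longrightarrow> a \<in> S2 \<Longrightarrow> b \<notin> S2 \<Longrightarrow> a \<notin> S1 \<union> T1 \<and> b \<notin> S1 \<union> T1"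
proof -
  have no_walk: "\<not> path_arcs (x # as @ [y]) \<subseteq> B" if "length as \<le> 3" for as
    using short_walk_if_path_arcs_subset[OF that] assms(1) by metis
  have no_arc: "(w, y) \<notin> B" if "w \<in> S2" for w
    using that no_walk[of "[]"] no_walk[of "[_]"] no_walk[of "[_, _]"]
    unfolding S2_def S1_def by auto
  have no_path2: "(b, y) \<notin> B" if "w \<in> S2" "(w, b) \<in> B" for w b
    using that no_walk[of "[_]"] no_walk[of "[_, _]"] no_walk[of "[_, _, _]"]
    unfolding S2_def S1_def by auto
  have "y \<notin> S2"
    using assms(2) no_walk[of "[]"] no_walk[of "[_]"] unfolding S2_def S1_def by auto
  show "S1 \<subseteq> S2" unfolding S2_def by blast
  show "S2 \<inter> T1 = {}"
    using \<open>y \<notin> S2\<close> no_arc unfolding T1_def by blast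
  show "a \<notin> S1 \<union> T1 \<and> b \<notin> S1 \<union> T1" if "(a, b) \<in> B" "a \<in> S2" "b \<notin> S2" for a b
    using that \<open>y \<notin> S2\<close> no_arc no_path2 unfolding T1_def S2_def by blast
qed

text \<open>Greedy routing: the at most \<open>4 * card D\<close> arcs used by the paths routed so far
  are deleted before the next demand is routed.\<close>
lemma disjoint_routing_if_robustly_linked:
  assumes linked: "robustly_linked A X R" and "finite D" and "4 * card D \<le> R"
    and "\<forall>d\<in>D. src d \<in> X \<and> tgt d \<in> X \<and> src d \<noteq> tgt d"
  shows "\<exists>p. (\<forall>d\<in>D. dpath A (p d) (src d) (tgt d) \<and> card (path_arcs (p d)) \<le> 4) \<and>
     disjoint_family_on (\<lambda>d. path_arcs (p d)) D"
  using assms(2-)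
proof (induction D rule: finite_induct)
  case empty
  then show ?case by (simp add: disjoint_family_on_def)
next
  case (insert d F)
  then obtain p where p: "\<forall>d\<in>F. dpath A (p d) (src d) (tgt d) \<and> card (path_arcs (p d)) \<le> 4"
    and disj: "disjoint_family_on (\<lambda>d. path_arcs (p d)) F"
    by auto
  define Z where "Z = (\<Union>d'\<in>F. path_arcs (p d'))"
  have "finite Z" unfolding Z_def path_arcs_def using insert.hyps by auto
  have "card Z \<le> (\<Sum>d'\<in>F. card (path_arcs (p d')))"
    unfolding Z_def by (rule card_UN_le[OF insert.hyps(1)])
  also have "\<dots> \<le> 4 * card F" using p sum_bounded_above[of F "\<lambda>d'. card (path_arcs (p d'))" 4]
    by (simp add: mult.commute)
  finally have "card Z \<le> R" using insert.hyps insert.prems by simp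
  then obtain ys where ys: "dpath (A - Z) ys (src d) (tgt d)" "card (path_arcs ys) \<le> 4"
    using short_dpath_if_short_walk linked insert.prems \<open>finite Z\<close>
    unfolding robustly_linked_def by (metis insertI1)
  have "dpath A ys (src d) (tgt d)" using ys(1) by (rule dpath_mono) blast
  moreover have "path_arcs ys \<inter> (\<Union>d'\<in>F. path_arcs (p d')) = {}"
    using ys(1) unfolding Z_def dpath_def by auto
  moreover have "disjoint_family_on (\<lambda>d'. path_arcs ((p(d := ys)) d')) F"
    using disj insert.hyps(2) unfolding disjoint_family_on_def by auto
  ultimately show ?case
    using p ys(2) insert.hyps(2)
    by (intro exI[of _ "p(d := ys)"]) (auto simp: disjoint_family_on_insert split: if_splits; blast)
qed

lemma immersion_copy_of_disjoint_paths:
  assumes "AH \<subseteq> VH \<times> VH" "AT \<subseteq> VT \<times> VT" "inj_on \<phi> VH" "\<phi> ` VH \<subseteq> VT"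
    and paths: "\<forall>e\<in>AH. dpath AT (P e) (\<phi> (fst e)) (\<phi> (snd e))"
    and disj: "disjoint_family_on (\<lambda>e. path_arcs (P e)) AH"
  shows "immersion_copy VH AH VT AT VT (\<Union>e\<in>AH. path_arcs (P e)) \<phi> P"
proof -
  let ?B = "\<Union>e\<in>AH. path_arcs (P e)"
  have "?B \<subseteq> AT" using paths by (auto simp: dpath_def)
  moreover have "set (P e) \<subseteq> VT" if "e \<in> AH" for e
  proof -
    have "\<phi> (fst e) \<in> VT" using that assms(1,4) by (force simp: mem_Times_iff)
    moreover have "hd (P e) = \<phi> (fst e)" "path_arcs (P e) \<subseteq> VT \<times> VT"
      using paths that assms(2) by (auto simp: dpath_def)
    ultimately show ?thesis using set_subset_if_path_arcs_subset[of "P e" VT] by simp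
  qed
  moreover have "dpath ?B (P e) (\<phi> (fst e)) (\<phi> (snd e))" if "e \<in> AH" for e
    using paths that by (auto simp: dpath_def)
  moreover have "\<exists>!e. e \<in> AH \<and> b \<in> path_arcs (P e)" if "b \<in> ?B" for b
    using that disj unfolding disjoint_family_on_def by blast
  ultimately show ?thesis
    using assms(2-4) unfolding immersion_copy_def by (intro conjI ballI) auto
qed

text \<open>Take \<open>k\<close> disjoint copies of the vertex set of \<open>H\<close> inside \<open>X\<close> and route all
  \<open>k * card AH\<close> arcs simultaneously.\<close>
lemma has_disjoint_immersions_if_robustly_linked:
  fixes VH :: "'a set" and VT :: "'b set"
  assumes "simple_digraph VH AH" and "AT \<subseteq> VT \<times> VT" and "X \<subseteq> VT" "finite X"
    and "k * card VH \<le> card X" and linked: "robustly_linked AT X R" and "4 * (k * card AH) \<le> R"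
  shows "has_disjoint_immersions k VH AH VT AT"
proof -
  have "finite VH" and AH: "AH \<subseteq> VH \<times> VH" "\<forall>v. (v, v) \<notin> AH"
    using assms(1) unfolding simple_digraph_def by auto
  then have "finite AH" by (meson finite_SigmaI finite_subset)
  have "card ({..<k} \<times> VH) \<le> card X" using assms(5) by (simp add: card_cartesian_product)
  then obtain \<psi> where \<psi>: "\<psi> ` ({..<k} \<times> VH) \<subseteq> X" "inj_on \<psi> ({..<k} \<times> VH)"
    using card_le_inj \<open>finite VH\<close> \<open>finite X\<close> by (metis finite_SigmaI finite_lessThan)
  define D where "D = {..<k} \<times> AH"
  define src where "src = (\<lambda>(i, e :: 'a \<times> 'a). \<psi> (i, fst e) :: 'b)"
  define tgt where "tgt = (\<lambda>(i, e :: 'a \<times> 'a). \<psi> (i, snd e) :: 'b)"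
  have "\<forall>d\<in>D. src d \<in> X \<and> tgt d \<in> X \<and> src d \<noteq> tgt d"
    using \<psi> AH unfolding D_def src_def tgt_def inj_on_def by fastforce
  moreover have "finite D" "4 * card D \<le> R"
    using \<open>finite AH\<close> assms(7) by (simp_all add: D_def card_cartesian_product)
  ultimately obtain p where p: "\<forall>d\<in>D. dpath AT (p d) (src d) (tgt d)"
    and disj: "disjoint_family_on (\<lambda>d. path_arcs (p d)) D"
    using disjoint_routing_if_robustly_linked[OF linked] by metis
  define Bs where "Bs = (\<lambda>i. \<Union>e\<in>AH. path_arcs (p (i, e)))"
  have "immersion_copy VH AH VT AT VT (Bs i) (\<lambda>v. \<psi> (i, v)) (\<lambda>e. p (i, e))" if "i < k" for i
    unfolding Bs_def
  proof (rule immersion_copy_of_disjoint_paths)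
    show "inj_on (\<lambda>v. \<psi> (i, v)) VH"
      using \<psi>(2) that unfolding inj_on_def by auto
    show "(\<lambda>v. \<psi> (i, v)) ` VH \<subseteq> VT"
      using \<psi>(1) that assms(3) by force
    show "\<forall>e\<in>AH. dpath AT (p (i, e)) (\<psi> (i, fst e)) (\<psi> (i, snd e))"
      using p that unfolding D_def src_def tgt_def by auto
    show "disjoint_family_on (\<lambda>e. path_arcs (p (i, e))) AH"
      using disj that unfolding D_def disjoint_family_on_def by auto
  qed (use AH assms(2) in auto)
  moreover have "Bs i \<inter> Bs j = {}" if "i < k" "j < k" "i \<noteq> j" for i j
    using disj that unfolding Bs_def D_def disjoint_family_on_def by blast
  ultimately show ?thesis
    unfolding has_disjoint_immersions_def
    by (intro exI[of _ "\<lambda>_. VT"] exI[of _ Bs] exI[of _ "\<lambda>i v. \<psi> (i, v)"]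
        exI[of _ "\<lambda>i e. p (i, e)"]) blast
qed

section \<open>Out-arcs of vertex sets in a tournament\<close>

definition outdeg :: "('a \<times> 'a) set \<Rightarrow> 'a \<Rightarrow> nat" where
  "outdeg A v = card {u. (v, u) \<in> A}"

definition indeg :: "('a \<times> 'a) set \<Rightarrow> 'a \<Rightarrow> nat" where
  "indeg A v = card {u. (u, v) \<in> A}"

definition out_arcs :: "('a \<times> 'a) set \<Rightarrow> 'a set \<Rightarrow> ('a \<times> 'a) set" where
  "out_arcs A S = {(u, v) \<in> A. u \<in> S \<and> v \<notin> S}"

lemma outdeg_le_outdeg_Diff:
  assumes "finite A" "finite Z"
  shows "outdeg A x \<le> outdeg (A - Z) x + card Z"
proof -
  have "{u. (x, u) \<in> A} \<subseteq> {u. (x, u) \<in> A - Z} \<union> snd ` Z" by force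
  moreover have "finite {u. (x, u) \<in> A - Z}"
    using finite_imageI[OF \<open>finite A\<close>, of snd] by (rule rev_finite_subset) force
  ultimately have "outdeg A x \<le> card ({u. (x, u) \<in> A - Z} \<union> snd ` Z)"
    unfolding outdeg_def using assms by (intro card_mono) auto
  also have "\<dots> \<le> outdeg (A - Z) x + card Z"
    unfolding outdeg_def
    using card_Un_le[of "{u. (x, u) \<in> A - Z}" "snd ` Z"] card_image_le[OF \<open>finite Z\<close>, of snd]
    by linarith
  finally show ?thesis .
qed

lemma indeg_le_indeg_Diff:
  assumes "finite A" "finite Z"
  shows "indeg A x \<le> indeg (A - Z) x + card Z"
proof -
  have "{u. (u, x) \<in> A} \<subseteq> {u. (u, x) \<in> A - Z} \<union> fst ` Z" by force
  moreover have "finite {u. (u, x) \<in> A - Z}"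
    using finite_imageI[OF \<open>finite A\<close>, of fst] by (rule rev_finite_subset) force
  ultimately have "indeg A x \<le> card ({u. (u, x) \<in> A - Z} \<union> fst ` Z)"
    unfolding indeg_def using assms by (intro card_mono) auto
  also have "\<dots> \<le> indeg (A - Z) x + card Z"
    unfolding indeg_def
    using card_Un_le[of "{u. (u, x) \<in> A - Z}" "fst ` Z"] card_image_le[OF \<open>finite Z\<close>, of fst]
    by linarith
  finally show ?thesis .
qed

lemma card_out_arcs_le:
  assumes "finite Z" "finite W"
    and "\<And>a b. (a, b) \<in> A - Z \<Longrightarrow> a \<in> S \<Longrightarrow> b \<notin> S \<Longrightarrow> a \<in> W \<and> b \<in> W"
  shows "card (out_arcs A S) \<le> card Z + card W * card W"
proof -
  have "out_arcs A S \<subseteq> Z \<union> W \<times> W"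
    using assms(3) unfolding out_arcs_def by blast
  then have "card (out_arcs A S) \<le> card (Z \<union> W \<times> W)"
    using assms(1,2) by (intro card_mono) auto
  also have "\<dots> \<le> card Z + card W * card W"
    using card_Un_le[of Z "W \<times> W"] by (simp add: card_cartesian_product)
  finally show ?thesis .
qed

lemma sum_outdeg_eq_card_arcs_from:
  assumes "finite A" "finite S"
  shows "(\<Sum>v\<in>S. outdeg A v) = card {(u, v) \<in> A. u \<in> S}"
proof -
  have "{(u, v) \<in> A. u \<in> S} = Sigma S (\<lambda>v. {u. (v, u) \<in> A})" by auto
  moreover have "finite {u. (v, u) \<in> A}" for v
    using finite_imageI[OF \<open>finite A\<close>, of snd] by (rule rev_finite_subset) force
  ultimately show ?thesis
    using assms(2) by (simp add: outdeg_def)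
qed

locale tournament_graph =
  fixes V :: "'a set" and A :: "('a \<times> 'a) set"
  assumes tournament: "tournament V A"
begin

lemma finite_V: "finite V"
  and arcs_subset: "A \<subseteq> V \<times> V"
  and no_loop: "(v, v) \<notin> A"
  and arc_total: "u \<in> V \<Longrightarrow> v \<in> V \<Longrightarrow> u \<noteq> v \<Longrightarrow> (u, v) \<in> A \<or> (v, u) \<in> A"
  using tournament unfolding tournament_def simple_digraph_def by blast+

lemma arc_asym:
  assumes "(u, v) \<in> A"
  shows "(v, u) \<notin> A"
proof -
  have "u \<in> V" "v \<in> V" "u \<noteq> v" using assms arcs_subset no_loop by auto
  then show ?thesis using assms tournament unfolding tournament_def by blast
qed

lemma finite_A: "finite A"
  using finite_subset[OF arcs_subset] finite_V by blast

lemma outdeg_plus_indeg: "v \<in> V \<Longrightarrow> outdeg A v + indeg A v = card V - 1"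
proof -
  assume "v \<in> V"
  then have "{u. (v, u) \<in> A} \<union> {u. (u, v) \<in> A} = V - {v}"
    using arcs_subset no_loop arc_total by blast
  moreover have "{u. (v, u) \<in> A} \<inter> {u. (u, v) \<in> A} = {}"
    using arc_asym by blast
  ultimately show ?thesis
    using finite_V \<open>v \<in> V\<close> unfolding outdeg_def indeg_def
    by (metis card_Diff_singleton card_Un_disjoint finite_Diff finite_Un)
qed

lemma card_arcs_within:
  assumes "S \<subseteq> V"
  shows "card {(u, v) \<in> A. u \<in> S \<and> v \<in> S} = card S choose 2"
proof -
  have "bij_betw (\<lambda>(u, v). {u, v}) {(u, v) \<in> A. u \<in> S \<and> v \<in> S} {T. T \<subseteq> S \<and> card T = 2}"
  proof (rule bij_betw_imageI)
    show "inj_on (\<lambda>(u, v). {u, v}) {(u, v) \<in> A. u \<in> S \<and> v \<in> S}"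
      using arc_asym by (auto simp: inj_on_def doubleton_eq_iff)
    show "(\<lambda>(u, v). {u, v}) ` {(u, v) \<in> A. u \<in> S \<and> v \<in> S} = {T. T \<subseteq> S \<and> card T = 2}"
    proof (intro equalityI subsetI)
      fix T assume "T \<in> {T. T \<subseteq> S \<and> card T = 2}"
      then obtain u v where "T = {u, v}" "u \<noteq> v" "u \<in> S" "v \<in> S"
        by (auto simp: card_2_iff)
      then show "T \<in> (\<lambda>(u, v). {u, v}) ` {(u, v) \<in> A. u \<in> S \<and> v \<in> S}"
        using arc_total[of u v] assms by (auto simp: insert_commute)
    qed (use no_loop in \<open>auto simp: card_insert_if\<close>)
  qed
  then show ?thesis
    using n_subsets[OF finite_subset[OF assms finite_V]] bij_betw_same_card by fastforce
qed

lemma sum_outdeg: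
  assumes "S \<subseteq> V"
  shows "2 * int (\<Sum>v\<in>S. outdeg A v) =
    int (card S) * (int (card S) - 1) + 2 * int (card (out_arcs A S))"
proof -
  have "{(u, v) \<in> A. u \<in> S} = {(u, v) \<in> A. u \<in> S \<and> v \<in> S} \<union> out_arcs A S"
    and "{(u, v) \<in> A. u \<in> S \<and> v \<in> S} \<inter> out_arcs A S = {}"
    unfolding out_arcs_def by auto
  moreover have "finite {(u, v) \<in> A. u \<in> S \<and> v \<in> S}" "finite (out_arcs A S)"
    unfolding out_arcs_def by (rule finite_subset[OF _ finite_A], blast)+
  ultimately have "(\<Sum>v\<in>S. outdeg A v) = (card S choose 2) + card (out_arcs A S)"
    using sum_outdeg_eq_card_arcs_from[OF finite_A finite_subset[OF assms finite_V]]
      card_arcs_within[OF assms]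
    by (simp add: card_Un_disjoint)
  moreover have "2 * (card S choose 2) = card S * (card S - 1)"
  proof -
    have "even (card S * (card S - 1))" by (cases "card S") auto
    then show ?thesis by (simp add: choose_two)
  qed
  moreover have "int (card S * (card S - 1)) = int (card S) * (int (card S) - 1)"
    by (cases "card S") (auto simp: algebra_simps)
  ultimately show ?thesis by linarith
qed

text \<open>The set \<open>P\<close> is the ball of radius two around \<open>x\<close> in \<open>A - Z\<close>, and \<open>w\<close> counts the
  vertices at distance at least two from \<open>x\<close> and to \<open>y\<close>.\<close>
lemma set_with_few_out_arcs_if_no_short_walk:
  assumes "x \<in> V" "y \<in> V" "x \<noteq> y" "finite Z" "\<not> short_walk (A - Z) x y"
  shows "\<exists>P w. P \<subseteq> V \<and> outdeg A x + 1 \<le> card P + card Z \<and> card P \<le> outdeg A y + card Z \<and>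
    w + outdeg A x + 1 \<le> outdeg A y + 2 * card Z \<and> card (out_arcs A P) \<le> card Z + w * w"
proof -
  define B where "B = A - Z"
  define S1 where "S1 = insert x {a. (x, a) \<in> B}"
  define T1 where "T1 = insert y {b. (b, y) \<in> B}"
  define S2 where "S2 = S1 \<union> {c. \<exists>a\<in>S1. (a, c) \<in> B}"
  define W where "W = V - (S1 \<union> T1)"
  note sep = separation_if_no_short_walk[OF assms(5,3), folded B_def, OF S1_def T1_def S2_def]
  have "B \<subseteq> V \<times> V" using arcs_subset unfolding B_def by blast
  then have sub: "S1 \<subseteq> V" "T1 \<subseteq> V" "S2 \<subseteq> V"
    using assms(1,2) unfolding S1_def T1_def S2_def by blast+
  then have fin: "finite S1" "finite T1" "finite S2" "finite W"
    using finite_V unfolding W_def by (auto intro: finite_subset)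
  have "card S1 = outdeg B x + 1" "card T1 = indeg B y + 1"
    using fin no_loop unfolding S1_def T1_def outdeg_def indeg_def B_def by auto
  moreover have "card S2 + card T1 \<le> card V"
  proof -
    have "card S2 + card T1 = card (S2 \<union> T1)"
      using sep(2) fin by (simp add: card_Un_disjoint)
    also have "\<dots> \<le> card V" using sub finite_V by (intro card_mono) auto
    finally show ?thesis .
  qed
  moreover have "card W + card S1 + card T1 = card V"
  proof -
    have "card (S1 \<union> T1) = card S1 + card T1"
      using sep(1,2) fin by (intro card_Un_disjoint) blast+
    moreover have "card W = card V - card (S1 \<union> T1)"
      unfolding W_def using sub fin by (intro card_Diff_subset) auto
    moreover have "card (S1 \<union> T1) \<le> card V" using sub finite_V by (intro card_mono) auto
    ultimately show ?thesis by linarith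
  qed
  moreover have "card (out_arcs A S2) \<le> card Z + card W * card W"
    using sep(3) arcs_subset assms(4) fin(4) unfolding W_def B_def
    by (intro card_out_arcs_le) blast+
  moreover have "outdeg A x \<le> outdeg B x + card Z"
    unfolding B_def by (rule outdeg_le_outdeg_Diff[OF finite_A assms(4)])
  moreover have "indeg A y \<le> indeg B y + card Z"
    unfolding B_def by (rule indeg_le_indeg_Diff[OF finite_A assms(4)])
  moreover have "outdeg A y + indeg A y + 1 = card V"
    using outdeg_plus_indeg[OF assms(2)] card_gt_0_iff[of V] assms(2) finite_V by auto
  moreover have "card S1 \<le> card S2" using fin(3) sep(1) by (rule card_mono)
  ultimately show ?thesis
    using sub(3) by (intro exI[of _ S2] exI[of _ "card W"]) linarith
qed

end

section \<open>Cuts of an ordering by decreasing outdegree\<close>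

lemma sum_le_sum_if_dominates:
  fixes f :: "'a \<Rightarrow> 'b::linordered_semidom"
  assumes "finite P" "finite Q" "card P = card Q"
    and dom: "\<And>a c. a \<in> P - Q \<Longrightarrow> c \<in> Q - P \<Longrightarrow> f c \<le> f a"
  shows "sum f Q \<le> sum f P"
proof -
  have card_eq: "card (P - Q) = card (Q - P)"
    using assms(1-3) by (metis card_Diff_subset_Int finite_Int inf_commute)
  have "sum f (Q - P) \<le> sum f (P - Q)"
  proof (cases "Q - P = {}")
    case True
    then have "P - Q = {}" using card_eq assms(1) by (metis card_0_eq card.empty finite_Diff)
    then show ?thesis using True by simp
  next
    case False
    have fin: "finite (f ` (Q - P))" using assms(2) by simp
    then have "Max (f ` (Q - P)) \<in> f ` (Q - P)" using False by (intro Max_in) auto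
    then obtain c0 where c0: "c0 \<in> Q - P" "f c0 = Max (f ` (Q - P))" by auto
    then have c0_max: "\<forall>c\<in>Q - P. f c \<le> f c0" using fin by simp
    have "sum f (Q - P) \<le> of_nat (card (Q - P)) * f c0"
      using c0_max by (intro sum_bounded_above) blast
    also have "\<dots> \<le> sum f (P - Q)"
      unfolding card_eq[symmetric] using dom c0(1) by (intro sum_bounded_below) blast
    finally show ?thesis .
  qed
  moreover have "sum f P = sum f (P \<inter> Q) + sum f (P - Q)" "sum f Q = sum f (Q \<inter> P) + sum f (Q - P)"
    using sum.Int_Diff assms(1,2) by blast+
  ultimately show ?thesis by (simp add: Int_commute add_left_mono)
qed

lemma exists_ordering_decreasing_in_injective_key:
  fixes g :: "'a \<Rightarrow> 'b::linorder"
  assumes "finite V" "inj_on g V"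
  shows "\<exists>\<sigma>. bij_betw \<sigma> V {1..card V} \<and> (\<forall>u\<in>V. \<forall>v\<in>V. \<sigma> u < \<sigma> v \<longleftrightarrow> g v < g u)"
proof -
  define \<sigma> where "\<sigma> v = Suc (card {u \<in> V. g v < g u})" for v
  have less_iff: "\<sigma> u < \<sigma> v \<longleftrightarrow> g v < g u" if "u \<in> V" "v \<in> V" for u v
  proof
    assume "g v < g u"
    then have "{w \<in> V. g u < g w} \<subset> {w \<in> V. g v < g w}" using \<open>u \<in> V\<close> by auto
    then show "\<sigma> u < \<sigma> v" unfolding \<sigma>_def using assms(1) by (simp add: psubset_card_mono)
  next
    assume "\<sigma> u < \<sigma> v"
    moreover have "\<sigma> v \<le> \<sigma> u" if "g u \<le> g v"
      unfolding \<sigma>_def using that assms(1) by (auto intro!: card_mono)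
    ultimately show "g v < g u" by (meson leD not_less)
  qed
  have "inj_on \<sigma> V"
  proof (rule inj_onI)
    fix u v assume uv: "u \<in> V" "v \<in> V" "\<sigma> u = \<sigma> v"
    then have "\<not> g v < g u" "\<not> g u < g v"
      using less_iff[OF uv(1,2)] less_iff[OF uv(2,1)] by simp_all
    then have "g u = g v" by (meson antisym not_less)
    then show "u = v" using inj_onD[OF assms(2)] uv(1,2) by blast
  qed
  moreover have "\<sigma> ` V \<subseteq> {1..card V}"
  proof -
    have "card {u \<in> V. g v < g u} < card V" if "v \<in> V" for v
      using that assms(1) by (intro psubset_card_mono) auto
    then show ?thesis unfolding \<sigma>_def by (auto simp: Suc_le_eq)
  qed
  ultimately have "bij_betw \<sigma> V {1..card V}"
    by (simp add: bij_betw_def card_image card_subset_eq)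
  then show ?thesis using less_iff by blast
qed

lemma exists_ordering_decreasing_in_key:
  fixes f :: "'a::linorder \<Rightarrow> 'b::linorder"
  assumes "finite V"
  shows "\<exists>\<sigma>. bij_betw \<sigma> V {1..card V} \<and> (\<forall>u\<in>V. \<forall>v\<in>V. \<sigma> u \<le> \<sigma> v \<longrightarrow> f v \<le> f u)"
proof -
  have "inj_on (\<lambda>v. (f v, v)) V" by (simp add: inj_on_def)
  then obtain \<sigma> where \<sigma>: "bij_betw \<sigma> V {1..card V}"
    and less_iff: "\<forall>u\<in>V. \<forall>v\<in>V. \<sigma> u < \<sigma> v \<longleftrightarrow> (f v, v) < (f u, u)"
    using exists_ordering_decreasing_in_injective_key[OF assms] by blast
  have "f v \<le> f u" if "u \<in> V" "v \<in> V" "\<sigma> u \<le> \<sigma> v" for u v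
  proof (cases "u = v")
    case False
    then have "\<sigma> u < \<sigma> v" using that \<sigma> by (metis bij_betw_imp_inj_on inj_on_eq_iff le_neq_implies_less)
    then show ?thesis using less_iff that by (auto simp: less_prod_def)
  qed simp
  then show ?thesis using \<sigma> by blast
qed

locale outdeg_ordering = tournament_graph +
  fixes \<sigma> :: "'a \<Rightarrow> nat"
  assumes bij: "bij_betw \<sigma> V {1..card V}"
    and outdeg_antimono: "u \<in> V \<Longrightarrow> v \<in> V \<Longrightarrow> \<sigma> u \<le> \<sigma> v \<Longrightarrow> outdeg A v \<le> outdeg A u"
begin

abbreviation "n \<equiv> card V"

definition tail :: "nat \<Rightarrow> 'a set" where
  "tail \<alpha> = {v \<in> V. \<alpha> < \<sigma> v}"

definition cut_size :: "nat \<Rightarrow> nat" where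
  "cut_size \<alpha> = card (out_arcs A (tail \<alpha>))"

lemma cut_at_eq_out_arcs_tail: "cut_at A \<sigma> \<alpha> = out_arcs A (tail \<alpha>)"
  unfolding cut_at_def out_arcs_def tail_def using arcs_subset by auto

lemma tail_subset: "tail \<alpha> \<subseteq> V"
  unfolding tail_def by auto

lemma finite_tail: "finite (tail \<alpha>)"
  using finite_subset[OF tail_subset finite_V] .

lemma tail_antimono: "\<alpha> \<le> \<beta> \<Longrightarrow> tail \<beta> \<subseteq> tail \<alpha>"
  unfolding tail_def by auto

lemma mem_tail_Diff: "v \<in> tail \<alpha> - tail \<beta> \<longleftrightarrow> v \<in> V \<and> \<alpha> < \<sigma> v \<and> \<sigma> v \<le> \<beta>"
  unfolding tail_def by auto

lemma position_range: "v \<in> V \<Longrightarrow> 1 \<le> \<sigma> v \<and> \<sigma> v \<le> n"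
  using bij unfolding bij_betw_def by auto

lemma position_exists: "1 \<le> p \<Longrightarrow> p \<le> n \<Longrightarrow> \<exists>v\<in>V. \<sigma> v = p"
  using bij unfolding bij_betw_def by (metis atLeastAtMost_iff imageE)

lemma position_inj: "u \<in> V \<Longrightarrow> v \<in> V \<Longrightarrow> \<sigma> u = \<sigma> v \<Longrightarrow> u = v"
  using bij unfolding bij_betw_def inj_on_def by blast

lemma card_tail:
  assumes "\<alpha> \<le> n"
  shows "card (tail \<alpha>) = n - \<alpha>"
proof -
  have "\<sigma> ` tail \<alpha> = {Suc \<alpha>..n}"
  proof
    show "\<sigma> ` tail \<alpha> \<subseteq> {Suc \<alpha>..n}" using position_range unfolding tail_def by auto
    show "{Suc \<alpha>..n} \<subseteq> \<sigma> ` tail \<alpha>"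
    proof
      fix p assume "p \<in> {Suc \<alpha>..n}"
      then obtain v where "v \<in> V" "\<sigma> v = p" using position_exists[of p] by auto
      then show "p \<in> \<sigma> ` tail \<alpha>" using \<open>p \<in> {Suc \<alpha>..n}\<close> unfolding tail_def by auto
    qed
  qed
  moreover have "inj_on \<sigma> (tail \<alpha>)"
    using bij tail_subset unfolding bij_betw_def by (rule inj_on_subset[OF conjunct1])
  ultimately show ?thesis using card_image by fastforce
qed

lemma card_tail_Diff:
  assumes "\<alpha> \<le> \<beta>" "\<beta> \<le> n"
  shows "card (tail \<alpha> - tail \<beta>) = \<beta> - \<alpha>"
  using card_tail[of \<alpha>] card_tail[of \<beta>] assms
    card_Diff_subset[OF finite_tail tail_antimono[OF assms(1)]] by simp

lemma cut_size_0: "cut_size 0 = 0"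
proof -
  have "tail 0 = V" unfolding tail_def using position_range by force
  moreover have "out_arcs A V = {}" unfolding out_arcs_def using arcs_subset by blast
  ultimately show ?thesis unfolding cut_size_def by simp
qed

lemma cut_size_n: "cut_size n = 0"
proof -
  have "tail n = {}" unfolding tail_def using position_range by force
  then show ?thesis unfolding cut_size_def out_arcs_def by simp
qed

lemma cut_size_le: "cut_size \<alpha> \<le> n * n"
proof -
  have "out_arcs A (tail \<alpha>) \<subseteq> V \<times> V" unfolding out_arcs_def using arcs_subset by auto
  then show ?thesis
    unfolding cut_size_def using card_mono[OF finite_cartesian_product[OF finite_V finite_V]]
    by (fastforce simp: card_cartesian_product)
qed

lemma cut_size_diff:
  assumes "\<alpha> \<le> \<beta>" "\<beta> \<le> n"
  shows "2 * int (cut_size \<alpha>) - 2 * int (cut_size \<beta>) =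
    2 * (\<Sum>v\<in>tail \<alpha> - tail \<beta>. int (outdeg A v))
    - (int (n - \<alpha>) * (int (n - \<alpha>) - 1) - int (n - \<beta>) * (int (n - \<beta>) - 1))"
proof -
  have "(\<Sum>v\<in>tail \<alpha>. outdeg A v) = (\<Sum>v\<in>tail \<alpha> - tail \<beta>. outdeg A v) + (\<Sum>v\<in>tail \<beta>. outdeg A v)"
    using sum.subset_diff[OF tail_antimono[OF assms(1)] finite_tail] .
  then show ?thesis
    using sum_outdeg[OF tail_subset, of \<alpha>] sum_outdeg[OF tail_subset, of \<beta>]
      card_tail[of \<alpha>] card_tail[of \<beta>] assms
    unfolding cut_size_def by simp
qed

text \<open>The tail of size \<open>card P\<close> has the smallest outdegree sum among all sets of that size,
  and in a tournament the outdegree sum of a set determines the number of its out-arcs.\<close>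
lemma cut_size_le_card_out_arcs:
  assumes P: "P \<subseteq> V"
  shows "cut_size (n - card P) \<le> card (out_arcs A P)"
proof -
  let ?Q = "tail (n - card P)"
  have "card P \<le> n" using card_mono[OF finite_V P] .
  then have "card ?Q = card P" using card_tail[of "n - card P"] by simp
  moreover have "outdeg A c \<le> outdeg A a" if "a \<in> P - ?Q" "c \<in> ?Q - P" for a c
    using that P outdeg_antimono unfolding tail_def by auto
  ultimately have "(\<Sum>v\<in>?Q. outdeg A v) \<le> (\<Sum>v\<in>P. outdeg A v)"
    using sum_le_sum_if_dominates[OF finite_subset[OF P finite_V] finite_tail] by metis
  then have "int (\<Sum>v\<in>?Q. outdeg A v) \<le> int (\<Sum>v\<in>P. outdeg A v)"
    by (rule of_nat_mono)
  then show ?thesis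
    using sum_outdeg[OF P] sum_outdeg[OF tail_subset, of "n - card P", unfolded \<open>card ?Q = card P\<close>]
    unfolding cut_size_def by linarith
qed

lemma cut_size_step:
  assumes "w \<in> V" "\<sigma> w = Suc \<alpha>"
  shows "int (cut_size \<alpha>) - int (cut_size (Suc \<alpha>)) = int (outdeg A w) - int (n - Suc \<alpha>)"
proof -
  have "Suc \<alpha> \<le> n" using position_range[OF assms(1)] assms(2) by simp
  have "tail \<alpha> - tail (Suc \<alpha>) = {w}"
  proof (intro equalityI subsetI)
    fix v assume "v \<in> tail \<alpha> - tail (Suc \<alpha>)"
    then have "v \<in> V" "\<sigma> v = \<sigma> w" using assms(2) mem_tail_Diff by auto
    then show "v \<in> {w}" using position_inj assms(1) by auto
  qed (use assms mem_tail_Diff in auto)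
  moreover define m where "m = int (n - Suc \<alpha>)"
  moreover have "int (n - \<alpha>) = m + 1" unfolding m_def using \<open>Suc \<alpha> \<le> n\<close> by simp
  moreover have "(m + 1) * (m + 1 - 1) - m * (m - 1) = 2 * m" by (simp add: algebra_simps)
  ultimately show ?thesis
    using cut_size_diff[of \<alpha> "Suc \<alpha>"] \<open>Suc \<alpha> \<le> n\<close> by simp
qed

end

section \<open>The maximal cut\<close>

locale max_cut = outdeg_ordering +
  fixes \<alpha>0 :: nat
  assumes max_le: "\<alpha>0 \<le> n"
    and cut_size_le_max: "\<And>\<alpha>. \<alpha> \<le> n \<Longrightarrow> cut_size \<alpha> \<le> cut_size \<alpha>0"
    and cut_size_max_pos: "0 < cut_size \<alpha>0"
begin

lemma max_pos: "1 \<le> \<alpha>0"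
  using cut_size_max_pos cut_size_0 by (cases \<alpha>0) auto

lemma max_less: "\<alpha>0 < n"
  using cut_size_max_pos cut_size_n max_le by (cases "\<alpha>0 = n") auto

lemma outdeg_ge_before_max:
  assumes "v \<in> V" "\<sigma> v \<le> Suc \<alpha>0"
  shows "int (n - \<alpha>0) - 1 \<le> int (outdeg A v)"
proof -
  obtain w where w: "w \<in> V" "\<sigma> w = Suc \<alpha>0" using position_exists[of "Suc \<alpha>0"] max_less by auto
  have "int (n - Suc \<alpha>0) \<le> int (outdeg A w)"
    using cut_size_step[OF w] cut_size_le_max[of "Suc \<alpha>0"] max_less by simp
  moreover have "outdeg A w \<le> outdeg A v" using outdeg_antimono[OF assms(1) w(1)] assms(2) w(2) by simp
  ultimately show ?thesis using max_less by linarith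
qed

lemma outdeg_le_after_max:
  assumes "v \<in> V" "\<alpha>0 \<le> \<sigma> v"
  shows "int (outdeg A v) \<le> int (n - \<alpha>0)"
proof -
  obtain w where w: "w \<in> V" "\<sigma> w = Suc (\<alpha>0 - 1)"
    using position_exists[of \<alpha>0] max_pos max_le by auto
  have "cut_size (\<alpha>0 - 1) \<le> cut_size \<alpha>0" using cut_size_le_max max_le by simp
  then have "int (outdeg A w) \<le> int (n - \<alpha>0)"
    using cut_size_step[OF w] max_pos by simp
  moreover have "outdeg A v \<le> outdeg A w" using outdeg_antimono[OF w(1) assms(1)] assms(2) w(2) max_pos by simp
  ultimately show ?thesis by linarith
qed

lemma cut_size_max_le:
  assumes "\<alpha> \<le> n"
  shows "2 * int (cut_size \<alpha>0) \<le> 2 * int (cut_size \<alpha>) + \<bar>int \<alpha> - int \<alpha>0\<bar> * (\<bar>int \<alpha> - int \<alpha>0\<bar> + 1)"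
proof (cases "\<alpha> \<le> \<alpha>0")
  case True
  define M where "M = int (n - \<alpha>0)"
  define I where "I = int \<alpha>0 - int \<alpha>"
  let ?D = "tail \<alpha> - tail \<alpha>0"
  have "int (card ?D) = I" using card_tail_Diff[OF True max_le] True unfolding I_def by simp
  moreover have "M - 1 \<le> int (outdeg A v)" if "v \<in> ?D" for v
    using that outdeg_ge_before_max mem_tail_Diff unfolding M_def by (metis le_SucI)
  ultimately have "I * (M - 1) \<le> (\<Sum>v\<in>?D. int (outdeg A v))"
    using sum_bounded_below[of ?D "M - 1" "\<lambda>v. int (outdeg A v)"] by simp
  moreover have "2 * int (cut_size \<alpha>) - 2 * int (cut_size \<alpha>0) =
      2 * (\<Sum>v\<in>?D. int (outdeg A v)) - ((M + I) * (M + I - 1) - M * (M - 1))"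
    using cut_size_diff[OF True max_le] True max_le unfolding M_def I_def by simp
  moreover have "(M + I) * (M + I - 1) - M * (M - 1) = 2 * (I * (M - 1)) + I * (I + 1)"
    by (simp add: algebra_simps)
  moreover have abs: "\<bar>int \<alpha> - int \<alpha>0\<bar> = I" unfolding I_def using True by simp
  ultimately show ?thesis unfolding abs by linarith
next
  case False
  define M where "M = int (n - \<alpha>0)"
  define I where "I = int \<alpha> - int \<alpha>0"
  let ?D = "tail \<alpha>0 - tail \<alpha>"
  have "int (card ?D) = I" using card_tail_Diff[OF _ assms] False unfolding I_def by simp
  moreover have "int (outdeg A v) \<le> M" if "v \<in> ?D" for v
    using that outdeg_le_after_max mem_tail_Diff unfolding M_def by (metis less_imp_le)
  ultimately have "(\<Sum>v\<in>?D. int (outdeg A v)) \<le> I * M"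
    using sum_bounded_above[of ?D "\<lambda>v. int (outdeg A v)" M] by simp
  moreover have "2 * int (cut_size \<alpha>0) - 2 * int (cut_size \<alpha>) =
      2 * (\<Sum>v\<in>?D. int (outdeg A v)) - (M * (M - 1) - (M - I) * (M - I - 1))"
    using cut_size_diff[of \<alpha>0 \<alpha>] False assms unfolding M_def I_def by simp
  moreover have "M * (M - 1) - (M - I) * (M - I - 1) = 2 * (I * M) - I * (I + 1)"
    by (simp add: algebra_simps)
  moreover have abs: "\<bar>int \<alpha> - int \<alpha>0\<bar> = I" unfolding I_def using False by simp
  ultimately show ?thesis unfolding abs by linarith
qed

lemma outdeg_le_at_distance_before_max:
  assumes "1 \<le> N" "2 * N \<le> \<alpha>0" and w: "w \<in> V" "\<sigma> w = Suc (\<alpha>0 - N)"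
  shows "int (outdeg A w) \<le> int (n - \<alpha>0) + 2 * int N"
proof -
  define M where "M = int (n - \<alpha>0)"
  define K where "K = int N"
  let ?D = "tail (\<alpha>0 - 2 * N) - tail (\<alpha>0 - N)" and ?X = "tail (\<alpha>0 - N) - tail \<alpha>0"
  have e: "int (n - (\<alpha>0 - N)) = M + K" "int (n - (\<alpha>0 - 2 * N)) = M + 2 * K"
    unfolding M_def K_def using assms(2) max_le by simp_all
  have "\<alpha>0 - 2 * N \<le> \<alpha>0 - N" "\<alpha>0 - N \<le> n" "\<alpha>0 - N \<le> \<alpha>0" using max_le by simp_all
  note diff_D = cut_size_diff[OF this(1,2), unfolded e]
    and diff_X = cut_size_diff[OF this(3) max_le, unfolded e M_def[symmetric]]
  have "int (outdeg A w) \<le> int (outdeg A v)" if "v \<in> ?D" for v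
    using that w outdeg_antimono[of v w] unfolding mem_tail_Diff by simp
  then have sum_D: "K * int (outdeg A w) \<le> (\<Sum>v\<in>?D. int (outdeg A v))"
    using sum_bounded_below[of ?D "int (outdeg A w)"] card_tail_Diff[of "\<alpha>0 - 2 * N" "\<alpha>0 - N"]
      assms(2) max_le unfolding K_def by simp
  have "M - 1 \<le> int (outdeg A v)" if "v \<in> ?X" for v
    using that outdeg_ge_before_max unfolding mem_tail_Diff M_def by simp
  then have sum_X: "K * (M - 1) \<le> (\<Sum>v\<in>?X. int (outdeg A v))"
    using sum_bounded_below[of ?X "M - 1"] card_tail_Diff[of "\<alpha>0 - N" \<alpha>0] assms(2) max_le
    unfolding K_def by simp
  have "cut_size (\<alpha>0 - 2 * N) \<le> cut_size \<alpha>0" using cut_size_le_max max_le by simp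
  then have "K * int (outdeg A w) \<le> K * (M + 2 * K)"
    using diff_D diff_X sum_D sum_X by (simp add: algebra_simps)
  then show ?thesis using assms(1) unfolding M_def K_def by simp
qed

lemma outdeg_ge_at_distance_after_max:
  assumes "1 \<le> N" "\<alpha>0 + 2 * N \<le> n" and w: "w \<in> V" "\<sigma> w = \<alpha>0 + N"
  shows "int (n - \<alpha>0) - 2 * int N - 1 \<le> int (outdeg A w)"
proof -
  define M where "M = int (n - \<alpha>0)"
  define K where "K = int N"
  let ?X = "tail \<alpha>0 - tail (\<alpha>0 + N)" and ?D = "tail (\<alpha>0 + N) - tail (\<alpha>0 + 2 * N)"
  have e: "int (n - (\<alpha>0 + N)) = M - K" "int (n - (\<alpha>0 + 2 * N)) = M - 2 * K"
    unfolding M_def K_def using assms(2) by simp_all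
  have "\<alpha>0 \<le> \<alpha>0 + N" "\<alpha>0 + N \<le> n" "\<alpha>0 + N \<le> \<alpha>0 + 2 * N" using assms(2) by simp_all
  note diff_X = cut_size_diff[OF this(1,2), unfolded e M_def[symmetric]]
    and diff_D = cut_size_diff[OF this(3) assms(2), unfolded e]
  have "int (outdeg A v) \<le> int (outdeg A w)" if "v \<in> ?D" for v
    using that w outdeg_antimono[of w v] unfolding mem_tail_Diff by simp
  then have sum_D: "(\<Sum>v\<in>?D. int (outdeg A v)) \<le> K * int (outdeg A w)"
    using sum_bounded_above[of ?D _ "int (outdeg A w)"] card_tail_Diff[of "\<alpha>0 + N" "\<alpha>0 + 2 * N"]
      assms(2) unfolding K_def by simp
  have "int (outdeg A v) \<le> M" if "v \<in> ?X" for v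
    using that outdeg_le_after_max unfolding mem_tail_Diff M_def by simp
  then have sum_X: "(\<Sum>v\<in>?X. int (outdeg A v)) \<le> K * M"
    using sum_bounded_above[of ?X _ M] card_tail_Diff[of \<alpha>0 "\<alpha>0 + N"] assms(2)
    unfolding K_def by simp
  have "cut_size (\<alpha>0 + 2 * N) \<le> cut_size \<alpha>0" using cut_size_le_max assms(2) by simp
  then have "K * (M - 2 * K - 1) \<le> K * int (outdeg A w)"
    using diff_D diff_X sum_D sum_X by (simp add: algebra_simps)
  then show ?thesis using assms(1) unfolding M_def K_def by simp
qed

definition near_max_outdeg :: "nat \<Rightarrow> 'a \<Rightarrow> bool" where
  "near_max_outdeg N v \<longleftrightarrow>
     int (n - \<alpha>0) - 2 * int N - 1 \<le> int (outdeg A v) \<and> int (outdeg A v) \<le> int (n - \<alpha>0) + 2 * int N"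

text \<open>Take the \<open>N\<close> positions just before \<open>\<alpha>0\<close> if there is room for \<open>2 * N\<close> of them,
  and the \<open>N\<close> positions just after \<open>\<alpha>0\<close> otherwise.\<close>
lemma exists_near_max_outdeg_set:
  assumes "1 \<le> N" "4 * N \<le> n"
  shows "\<exists>X \<subseteq> V. card X = N \<and> (\<forall>x\<in>X. near_max_outdeg N x)"
proof (cases "2 * N \<le> \<alpha>0")
  case True
  define X where "X = tail (\<alpha>0 - N) - tail \<alpha>0"
  have "Suc (\<alpha>0 - N) \<le> n" using True max_le assms(1) by linarith
  then obtain w where w: "w \<in> V" "\<sigma> w = Suc (\<alpha>0 - N)"
    using position_exists[of "Suc (\<alpha>0 - N)"] by auto
  have "near_max_outdeg N x" if "x \<in> X" for x
  proof -
    have "x \<in> V" "\<alpha>0 - N < \<sigma> x" "\<sigma> x \<le> \<alpha>0" using that mem_tail_Diff unfolding X_def by auto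
    then have "outdeg A x \<le> outdeg A w" using outdeg_antimono[of w x] w by simp
    then show ?thesis
      using outdeg_le_at_distance_before_max[OF assms(1) True w] outdeg_ge_before_max[of x] \<open>x \<in> V\<close> \<open>\<sigma> x \<le> \<alpha>0\<close>
      unfolding near_max_outdeg_def by simp
  qed
  moreover have "card X = N" "X \<subseteq> V"
    using card_tail_Diff[of "\<alpha>0 - N" \<alpha>0] True max_le tail_subset unfolding X_def by auto
  ultimately show ?thesis by blast
next
  case False
  define X where "X = tail \<alpha>0 - tail (\<alpha>0 + N)"
  have room: "\<alpha>0 + 2 * N \<le> n" using False assms(2) by simp
  obtain w where w: "w \<in> V" "\<sigma> w = \<alpha>0 + N"
    using position_exists[of "\<alpha>0 + N"] room assms(1) by auto
  have "near_max_outdeg N x" if "x \<in> X" for x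
  proof -
    have "x \<in> V" "\<alpha>0 < \<sigma> x" "\<sigma> x \<le> \<alpha>0 + N" using that mem_tail_Diff unfolding X_def by auto
    then have "outdeg A w \<le> outdeg A x" using outdeg_antimono[of x w] w by simp
    then show ?thesis
      using outdeg_ge_at_distance_after_max[OF assms(1) room w] outdeg_le_after_max[of x] \<open>x \<in> V\<close> \<open>\<alpha>0 < \<sigma> x\<close>
      unfolding near_max_outdeg_def by simp
  qed
  moreover have "card X = N" "X \<subseteq> V"
    using card_tail_Diff[of \<alpha>0 "\<alpha>0 + N"] room tail_subset unfolding X_def by auto
  ultimately show ?thesis by blast
qed

text \<open>The ball \<open>P\<close> around \<open>x\<close> has size within \<open>6 * N\<close> of \<open>n - \<alpha>0\<close> but only
  \<open>O(N\<^sup>2)\<close> out-arcs, so the cut at \<open>n - card P\<close>, and with it the maximal cut, is small.\<close>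
lemma cut_size_max_le_if_no_short_walk:
  assumes "1 \<le> N" "x \<in> V" "y \<in> V" "x \<noteq> y" "near_max_outdeg N x" "near_max_outdeg N y"
    and "finite Z" "card Z \<le> 4 * N" "\<not> short_walk (A - Z) x y"
  shows "cut_size \<alpha>0 \<le> 200 * N * N"
proof -
  obtain P w where P: "P \<subseteq> V" and
    P_lower: "outdeg A x + 1 \<le> card P + card Z" and P_upper: "card P \<le> outdeg A y + card Z" and
    w: "w + outdeg A x + 1 \<le> outdeg A y + 2 * card Z" and
    out_P: "card (out_arcs A P) \<le> card Z + w * w"
    using set_with_few_out_arcs_if_no_short_walk[OF assms(2-4,7,9)] by blast
  define K where "K = int N"
  define i where "i = \<bar>int (n - card P) - int \<alpha>0\<bar>"
  have "card P \<le> n" using card_mono[OF finite_V P] .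
  then have "i \<le> 6 * K"
    using assms(5,6,8) P_lower P_upper max_le unfolding i_def K_def near_max_outdeg_def by linarith
  then have "i * (i + 1) \<le> (6 * K) * (6 * K + 1)"
    unfolding i_def by (intro mult_mono) auto
  then have "i * (i + 1) \<le> 36 * (K * K) + 6 * K"
    by (simp add: algebra_simps)
  moreover have "int w \<le> 12 * K"
    using assms(5,6,8) w unfolding K_def near_max_outdeg_def by linarith
  then have "int w * int w \<le> (12 * K) * (12 * K)"
    by (intro mult_mono) auto
  then have "int w * int w \<le> 144 * (K * K)"
    by (simp add: algebra_simps)
  moreover have "cut_size (n - card P) \<le> 4 * N + w * w"
    using cut_size_le_card_out_arcs[OF P] out_P assms(8) by linarith
  then have "int (cut_size (n - card P)) \<le> int (4 * N + w * w)"
    by (rule of_nat_mono)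
  then have "int (cut_size (n - card P)) \<le> 4 * K + int w * int w"
    unfolding K_def by simp
  moreover have "2 * int (cut_size \<alpha>0) \<le> 2 * int (cut_size (n - card P)) + i * (i + 1)"
    using cut_size_max_le[of "n - card P"] unfolding i_def by simp
  moreover have "K \<le> K * K" using assms(1) unfolding K_def by simp
  ultimately have "int (cut_size \<alpha>0) \<le> 200 * (K * K)"
    by linarith
  then show ?thesis unfolding K_def by (metis mult.assoc of_nat_le_iff of_nat_mult of_nat_numeral)
qed

lemma exists_robustly_linked_set:
  assumes "200 * N * N < cut_size \<alpha>0"
  shows "\<exists>X \<subseteq> V. card X = N \<and> robustly_linked A X (4 * N)"
proof (cases "N = 0")
  case True
  then show ?thesis unfolding robustly_linked_def by (intro exI[of _ "{}"]) simp
next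
  case False
  have "4 * N \<le> n"
  proof (rule ccontr)
    assume "\<not> 4 * N \<le> n"
    then have "n * n \<le> (4 * N) * (4 * N)" by (intro mult_mono) auto
    then show False using cut_size_le[of \<alpha>0] assms by simp
  qed
  then obtain X where X: "X \<subseteq> V" "card X = N" "\<forall>x\<in>X. near_max_outdeg N x"
    using exists_near_max_outdeg_set False by (metis less_one not_le)
  have "robustly_linked A X (4 * N)"
    unfolding robustly_linked_def
  proof (intro ballI impI allI)
    fix x y and Z :: "('a \<times> 'a) set"
    assume "x \<in> X" "y \<in> X" "x \<noteq> y" "finite Z" "card Z \<le> 4 * N"
    then show "short_walk (A - Z) x y"
      using cut_size_max_le_if_no_short_walk[of N x y Z] X False assms by fastforce
  qed
  then show ?thesis using X by blast
qed

end

lemma (in outdeg_ordering) exists_robustly_linked_set_if_large_cut: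
  assumes "\<alpha> \<le> n" "200 * N * N < cut_size \<alpha>"
  shows "\<exists>X \<subseteq> V. card X = N \<and> robustly_linked A X (4 * N)"
proof -
  obtain \<alpha>0 where "\<alpha>0 \<le> n" "\<forall>\<beta>. \<beta> \<le> n \<longrightarrow> cut_size \<beta> \<le> cut_size \<alpha>0"
    using Lattices_Big.ex_has_greatest_nat[of "\<lambda>\<beta>. \<beta> \<le> n" \<alpha> cut_size "Suc (n * n)"] assms(1)
      cut_size_le by (auto simp: less_Suc_eq_le)
  then have "max_cut V A \<sigma> \<alpha>0"
    using assms by unfold_locales auto
  then show ?thesis
    using max_cut.exists_robustly_linked_set assms max_cut.cut_size_le_max
    by (metis order_less_le_trans)
qed

lemma (in tournament_graph) cutwidth_le_ordering_width:
  assumes "bij_betw \<tau> V {1..card V}"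
  shows "cutwidth V A \<le> ordering_width V A \<tau>"
proof -
  have "ordering_width V A \<tau>' \<le> card A" for \<tau>'
    unfolding ordering_width_def cut_at_def using finite_A by (intro Max.boundedI) (auto intro: card_mono)
  then have "{ordering_width V A \<tau>' | \<tau>'. bij_betw \<tau>' V {1..card V}} \<subseteq> {..card A}"
    unfolding atMost_def by blast
  then have "finite {ordering_width V A \<tau>' | \<tau>'. bij_betw \<tau>' V {1..card V}}"
    by (rule finite_subset) simp
  moreover have "ordering_width V A \<tau> \<in> {ordering_width V A \<tau>' | \<tau>'. bij_betw \<tau>' V {1..card V}}"
    using assms by blast
  ultimately show ?thesis unfolding cutwidth_def by (rule Min_le)
qed

lemma cutwidth_le_if_no_disjoint_immersions:
  fixes VT :: "'a::linorder set"
  assumes "simple_digraph VH AH" "tournament VT AT" "\<not> has_disjoint_immersions k VH AH VT AT"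
  shows "cutwidth VT AT \<le> 200 * (k * size_dg VH AH) * (k * size_dg VH AH)"
proof -
  interpret tournament_graph VT AT by (rule tournament_graph.intro[OF assms(2)])
  define N where "N = k * size_dg VH AH"
  obtain \<sigma> where \<sigma>: "bij_betw \<sigma> VT {1..card VT}"
    and "\<forall>u\<in>VT. \<forall>v\<in>VT. \<sigma> u \<le> \<sigma> v \<longrightarrow> outdeg AT v \<le> outdeg AT u"
    using exists_ordering_decreasing_in_key[OF finite_V] by blast
  then interpret outdeg_ordering VT AT \<sigma> by unfold_locales blast+
  have "cut_size \<alpha> \<le> 200 * N * N" if \<alpha>: "\<alpha> \<le> card VT" for \<alpha>
  proof (rule ccontr)
    assume "\<not> cut_size \<alpha> \<le> 200 * N * N"
    then obtain X where "X \<subseteq> VT" "card X = N" "robustly_linked AT X (4 * N)"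
      using exists_robustly_linked_set_if_large_cut[OF \<alpha>] by (auto simp: not_le)
    moreover have "k * card VH \<le> N" "4 * (k * card AH) \<le> 4 * N"
      unfolding N_def size_dg_def by simp_all
    ultimately have "has_disjoint_immersions k VH AH VT AT"
      using has_disjoint_immersions_if_robustly_linked[OF assms(1) arcs_subset]
        finite_subset[OF _ finite_V] by metis
    then show False using assms(3) by simp
  qed
  then have "ordering_width VT AT \<sigma> \<le> 200 * N * N"
    unfolding ordering_width_def cut_at_eq_out_arcs_tail cut_size_def[symmetric]
    by (intro Max.boundedI) auto
  then show ?thesis using cutwidth_le_ordering_width[OF \<sigma>] unfolding N_def by simp
qed

theorem corollary8:
  shows "\<exists>d::real. \<forall>(VH::nat set) (AH::(nat \<times> nat) set) (k::nat) (VT::nat set) (AT::(nat \<times> nat) set).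
    simple_digraph VH AH \<longrightarrow> k > 0 \<longrightarrow> tournament VT AT \<longrightarrow>
    \<not> has_disjoint_immersions k VH AH VT AT \<longrightarrow>
    real (cutwidth VT AT) \<le> d * (real (size_dg VH AH))^2 * (real k)^2"
proof (intro exI[of _ 200] allI impI)
  fix VH :: "nat set" and AH k and VT :: "nat set" and AT
  assume "simple_digraph VH AH" "tournament VT AT" "\<not> has_disjoint_immersions k VH AH VT AT"
  then have "real (cutwidth VT AT) \<le> real (200 * (k * size_dg VH AH) * (k * size_dg VH AH))"
    using cutwidth_le_if_no_disjoint_immersions of_nat_mono by blast
  then show "real (cutwidth VT AT) \<le> 200 * (real (size_dg VH AH))^2 * (real k)^2"
    by (simp add: power2_eq_square algebra_simps)
qed

end
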